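(* Let $k\in\mathbb{N}$, $\gamma\in\mathbb{N}$, and let $p_0,\dots,p_k$ be positive reals summing to $1$. Let $X_1,\dots,X_k$ have the negative multinomial distribution $$\Pr\{X_i=x_i,\ i=1,\dots,k\}=\frac\gamma n\,\frac{n!}{\prod_{i=0}^kx_i!}\prod_{i=0}^kp_i^{x_i},\qquad x_1,\dots,x_k\in\mathbb{Z}^+,$$ where $x_0=\gamma$ and $n=\sum_{i=0}^kx_i$. Let $X_0=\gamma$ and $\boldsymbol{X}=[X_0,\dots,X_k]^\top$. Let $z_0=\gamma$, let $z_1,\dots,z_k$ be nonnegative integers, $n=\sum_{i=0}^kz_i$, $\boldsymbol{z}=[z_0,\dots,z_k]^\top$, $\widehat\mu_i=np_i$ ($i=0,\dots,k$), $\widehat{\boldsymbol{\mu}}=[\widehat\mu_0,\dots,\widehat\mu_k]^\top$. Then $$\Pr\{\boldsymbol{X}\boldsymbol{\prec}\boldsymbol{z}\}\le\prod_{i=0}^k\Big(\frac{\widehat\mu_i}{z_i}\Big)^{z_i}\ \text{ if }\boldsymbol{z}\boldsymbol{\prec}\widehat{\boldsymbol{\mu}},\qquad \Pr\{\boldsymbol{X}\boldsymbol{\succ}\boldsymbol{z}\}\le\prod_{i=0}^k\Big(\frac{\widehat\mu_i}{z_i}\Big)^{z_i}\ \text{ if }\boldsymbol{z}\boldsymbol{\succ}\widehat{\boldsymbol{\mu}}.$$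
   Context: $\mathbb{Z}^+$ is the set of nonnegative integers. For vectors $\boldsymbol{x}=[x_0,\dots,x_k]^\top,\boldsymbol{y}=[y_0,\dots,y_k]^\top$, $\boldsymbol{x}\boldsymbol{\prec}\boldsymbol{y}$ means $x_i\le y_i$ for $i=1,\dots,k$ (index $0$ is not compared), and $\boldsymbol{x}\boldsymbol{\succ}\boldsymbol{y}$ means $x_i\ge y_i$ for $i=1,\dots,k$. The convention $0^0=1$ is used. *)

theory Defs
  imports "HOL-Analysis.Analysis"
begin

text \<open>Outcomes of the negative multinomial vector X = [X_0,...,X_k] with X_0 = gamma,
  encoded as functions nat => nat vanishing beyond index k.\<close>
definition nm_outcomes :: "nat \<Rightarrow> nat \<Rightarrow> (nat \<Rightarrow> nat) set" where
  "nm_outcomes k \<gamma> = {x. x 0 = \<gamma> \<and> (\<forall>i>k. x i = 0)}"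

definition nm_mass :: "nat \<Rightarrow> nat \<Rightarrow> (nat \<Rightarrow> real) \<Rightarrow> (nat \<Rightarrow> nat) \<Rightarrow> real" where
  "nm_mass k \<gamma> p x =
     (let n = (\<Sum>i\<le>k. x i) in
      (real \<gamma> / real n) * (fact n / (\<Prod>i\<le>k. fact (x i))) * (\<Prod>i\<le>k. p i ^ x i))"

definition nm_prob :: "nat \<Rightarrow> nat \<Rightarrow> (nat \<Rightarrow> real) \<Rightarrow> ((nat \<Rightarrow> nat) \<Rightarrow> bool) \<Rightarrow> ennreal" where
  "nm_prob k \<gamma> p P = (\<Sum>\<^sub>\<infinity>x\<in>{x\<in>nm_outcomes k \<gamma>. P x}. ennreal (nm_mass k \<gamma> p x))"

definition vprec :: "nat \<Rightarrow> (nat \<Rightarrow> 'a::ord) \<Rightarrow> (nat \<Rightarrow> 'a) \<Rightarrow> bool" where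
  "vprec k x y \<longleftrightarrow> (\<forall>i\<in>{1..k}. x i \<le> y i)"

end

theory Submission
  imports Defs
begin

text \<open>Change of measure. Since \<open>z\<^sub>0 = \<gamma> > 0\<close>, \<open>q\<^sub>i = z\<^sub>i / n\<close> is again an admissible parameter, and
  with \<open>r\<^sub>i = \<mu>\<^sub>i / z\<^sub>i\<close> one has \<open>p\<^sub>i\<^bsup>x\<^sub>i\<^esup> = r\<^sub>i\<^bsup>x\<^sub>i\<^esup> q\<^sub>i\<^bsup>x\<^sub>i\<^esup> \<le> r\<^sub>i\<^bsup>z\<^sub>i\<^esup> q\<^sub>i\<^bsup>x\<^sub>i\<^esup>\<close> whenever \<open>x\<^sub>i \<le> z\<^sub>i\<close> and \<open>r\<^sub>i \<ge> 1\<close>, or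
  \<open>x\<^sub>i \<ge> z\<^sub>i\<close> and \<open>r\<^sub>i \<le> 1\<close>. Hence on either event the mass under \<open>p\<close> is at most \<open>\<Prod>\<^sub>i r\<^sub>i\<^bsup>z\<^sub>i\<^esup>\<close> times
  the mass under \<open>q\<close>, and the total mass under \<open>q\<close> is at most 1: summing the negative
  multinomial mass over a box one coordinate at a time produces partial sums of negative
  binomial series \<open>\<Sum>\<^sub>j C(a+j,j) t\<^sup>j \<le> (1-t)\<^bsup>-(a+1)\<^esup>\<close>.\<close>

lemma geometric_partial_sum_le:
  fixes t :: real
  assumes "0 \<le> t" "t < 1"
  shows "(\<Sum>j\<le>M. t ^ j) \<le> 1 / (1 - t)"
proof -
  have "(1 - t) * (\<Sum>j\<le>M. t ^ j) \<le> 1"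
    unfolding sum_gp_basic using assms by simp
  then show ?thesis
    using assms by (simp add: field_simps mult.commute)
qed

lemma neg_binomial_partial_sum_recurrence:
  fixes t :: real
  shows "(1 - t) * (\<Sum>j\<le>M. real ((Suc a + j) choose j) * t ^ j)
       = (\<Sum>j\<le>M. real ((a + j) choose j) * t ^ j) - real ((Suc a + M) choose M) * t ^ Suc M"
proof (induction M)
  case 0
  then show ?case by (simp add: algebra_simps)
next
  case (Suc M)
  let ?S = "\<lambda>b. \<Sum>j\<le>M. real ((b + j) choose j) * t ^ j"
  have pascal: "real ((Suc a + Suc M) choose Suc M) = real ((Suc a + M) choose M) + real ((a + Suc M) choose Suc M)"
    by (metis add_Suc_right add_Suc_shift binomial_Suc_Suc of_nat_add)
  have "(1 - t) * (?S (Suc a) + real ((Suc a + Suc M) choose Suc M) * t ^ Suc M)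
      = ?S a + real ((a + Suc M) choose Suc M) * t ^ Suc M - real ((Suc a + Suc M) choose Suc M) * t ^ Suc (Suc M)"
    using Suc.IH pascal by (simp only: algebra_simps) (simp add: algebra_simps)
  then show ?case
    by (simp only: sum.atMost_Suc)
qed

lemma neg_binomial_partial_sum_le:
  fixes t :: real
  assumes "0 \<le> t" "t < 1"
  shows "(\<Sum>j\<le>M. real ((a + j) choose j) * t ^ j) \<le> 1 / (1 - t) ^ Suc a"
proof (induction a arbitrary: M)
  case 0
  then show ?case using geometric_partial_sum_le[OF assms] by simp
next
  case (Suc a)
  have "(1 - t) * (\<Sum>j\<le>M. real ((Suc a + j) choose j) * t ^ j) \<le> (\<Sum>j\<le>M. real ((a + j) choose j) * t ^ j)"
    unfolding neg_binomial_partial_sum_recurrence using assms by simp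
  also have "\<dots> \<le> 1 / (1 - t) ^ Suc a"
    by (rule Suc)
  finally have "(1 - t) * (\<Sum>j\<le>M. real ((Suc a + j) choose j) * t ^ j) \<le> 1 / (1 - t) ^ Suc a" .
  then show ?case
    using assms by (simp add: pos_le_divide_eq ac_simps)
qed

definition nm_box :: "nat \<Rightarrow> nat \<Rightarrow> nat \<Rightarrow> (nat \<Rightarrow> nat) set" where
  "nm_box k \<gamma> M = {x \<in> nm_outcomes k \<gamma>. \<forall>i\<in>{1..k}. x i \<le> M}"

definition multinomial_weight :: "nat \<Rightarrow> nat \<Rightarrow> (nat \<Rightarrow> real) \<Rightarrow> (nat \<Rightarrow> nat) \<Rightarrow> real" where
  "multinomial_weight k c q x =
     fact (c + (\<Sum>i=1..k. x i)) / (fact c * (\<Prod>i=1..k. fact (x i))) * (\<Prod>i=1..k. q i ^ x i)"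

lemma nm_box_0: "nm_box 0 \<gamma> M = {(\<lambda>i. if i = 0 then \<gamma> else 0)}"
  unfolding nm_box_def nm_outcomes_def by (auto simp: fun_eq_iff)

lemma nm_box_Suc: "nm_box (Suc k) \<gamma> M = (\<lambda>(x, j). x(Suc k := j)) ` (nm_box k \<gamma> M \<times> {..M})"
proof (intro equalityI subsetI)
  fix y
  assume y: "y \<in> nm_box (Suc k) \<gamma> M"
  then have "(y(Suc k := 0), y (Suc k)) \<in> nm_box k \<gamma> M \<times> {..M}"
    unfolding nm_box_def nm_outcomes_def by auto
  moreover have "y = (\<lambda>(x, j). x(Suc k := j)) (y(Suc k := 0), y (Suc k))"
    by simp
  ultimately show "y \<in> (\<lambda>(x, j). x(Suc k := j)) ` (nm_box k \<gamma> M \<times> {..M})"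
    by blast
qed (auto simp: nm_box_def nm_outcomes_def)

lemma inj_on_nm_box_extend: "inj_on (\<lambda>(x, j). x(Suc k := j)) (nm_box k \<gamma> M \<times> {..M})"
proof (rule inj_onI, clarsimp)
  fix x j y l
  assume "x \<in> nm_box k \<gamma> M" "y \<in> nm_box k \<gamma> M" and eq: "x(Suc k := j) = y(Suc k := l)"
  then have "x (Suc k) = 0" "y (Suc k) = 0"
    unfolding nm_box_def nm_outcomes_def by auto
  moreover have "j = l"
    using fun_cong[OF eq, of "Suc k"] by simp
  ultimately show "x = y \<and> j = l"
    using eq by (metis fun_upd_triv fun_upd_upd)
qed

lemma finite_nm_box: "finite (nm_box k \<gamma> M)"
  by (induction k) (auto simp: nm_box_0 nm_box_Suc)

lemma multinomial_weight_nonneg: "(\<And>i. i \<in> {1..k} \<Longrightarrow> 0 \<le> q i) \<Longrightarrow> 0 \<le> multinomial_weight k c q x"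
  unfolding multinomial_weight_def by (auto intro!: mult_nonneg_nonneg divide_nonneg_nonneg prod_nonneg)

lemma multinomial_weight_extend:
  assumes "x (Suc k) = 0"
  shows "multinomial_weight (Suc k) c q (x(Suc k := j))
       = multinomial_weight k c q x * real ((c + (\<Sum>i=1..k. x i) + j) choose j) * q (Suc k) ^ j"
proof -
  define m where "m = (\<Sum>i=1..k. x i)"
  define F where "F = (\<Prod>i=1..k. fact (x i) :: real)"
  have "F > 0"
    unfolding F_def by (auto intro: prod_pos)
  moreover have "real ((c + m + j) choose j) = fact (c + m + j) / (fact j * fact (c + m))"
    by (subst binomial_fact) auto
  ultimately show ?thesis
    unfolding multinomial_weight_def
    by (simp add: sum.cl_ivl_Suc prod.cl_ivl_Suc m_def F_def field_simps add.assoc)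
qed

lemma multinomial_weight_divide:
  assumes "d \<noteq> 0"
  shows "multinomial_weight k c (\<lambda>i. q i / d) x = multinomial_weight k c q x / d ^ (\<Sum>i=1..k. x i)"
  unfolding multinomial_weight_def
  by (simp add: power_divide prod_dividef power_sum)

lemma sum_multinomial_weight_nm_box_Suc:
  "(\<Sum>x\<in>nm_box (Suc k) \<gamma> M. multinomial_weight (Suc k) c q x)
   = (\<Sum>x\<in>nm_box k \<gamma> M. multinomial_weight k c q x *
        (\<Sum>j\<le>M. real ((c + (\<Sum>i=1..k. x i) + j) choose j) * q (Suc k) ^ j))"
proof -
  have "(\<Sum>x\<in>nm_box (Suc k) \<gamma> M. multinomial_weight (Suc k) c q x)
      = (\<Sum>x\<in>nm_box k \<gamma> M. \<Sum>j\<le>M. multinomial_weight (Suc k) c q (x(Suc k := j)))"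
    unfolding nm_box_Suc sum.reindex[OF inj_on_nm_box_extend]
    by (simp add: sum.cartesian_product split_def)
  also have "\<dots> = (\<Sum>x\<in>nm_box k \<gamma> M. multinomial_weight k c q x *
        (\<Sum>j\<le>M. real ((c + (\<Sum>i=1..k. x i) + j) choose j) * q (Suc k) ^ j))"
  proof (intro sum.cong refl)
    fix x
    assume "x \<in> nm_box k \<gamma> M"
    then have "x (Suc k) = 0"
      unfolding nm_box_def nm_outcomes_def by simp
    then show "(\<Sum>j\<le>M. multinomial_weight (Suc k) c q (x(Suc k := j)))
        = multinomial_weight k c q x * (\<Sum>j\<le>M. real ((c + (\<Sum>i=1..k. x i) + j) choose j) * q (Suc k) ^ j)"
      by (simp add: multinomial_weight_extend sum_distrib_left mult.assoc)
  qed
  finally show ?thesis .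
qed

lemma sum_multinomial_weight_nm_box_le:
  assumes "\<And>i. i \<in> {1..k} \<Longrightarrow> 0 \<le> q i" and "(\<Sum>i=1..k. q i) < 1"
  shows "(\<Sum>x\<in>nm_box k \<gamma> M. multinomial_weight k c q x) \<le> 1 / (1 - (\<Sum>i=1..k. q i)) ^ Suc c"
  using assms
proof (induction k arbitrary: q)
  case 0
  then show ?case by (simp add: nm_box_0 multinomial_weight_def)
next
  case (Suc k)
  define t where "t = q (Suc k)"
  define s where "s = (\<Sum>i=1..k. q i)"
  have sum_Suc: "(\<Sum>i=1..Suc k. q i) = s + t"
    unfolding s_def t_def by (simp add: sum.cl_ivl_Suc)
  have "0 \<le> t" "0 \<le> s"
    using Suc.prems(1) unfolding s_def t_def by (auto intro: sum_nonneg)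
  with Suc.prems(2) have "t < 1" "1 - t > 0"
    unfolding sum_Suc by auto
  define q' where "q' = (\<lambda>i. q i / (1 - t))"
  have s': "(\<Sum>i=1..k. q' i) = s / (1 - t)"
    unfolding q'_def s_def by (simp add: sum_divide_distrib)
  have IH: "(\<Sum>x\<in>nm_box k \<gamma> M. multinomial_weight k c q' x) \<le> 1 / (1 - s / (1 - t)) ^ Suc c"
    unfolding s'[symmetric]
  proof (rule Suc.IH)
    show "0 \<le> q' i" if "i \<in> {1..k}" for i
      using Suc.prems(1) that \<open>1 - t > 0\<close> unfolding q'_def by auto
    show "(\<Sum>i=1..k. q' i) < 1"
      unfolding s' using Suc.prems(2) \<open>1 - t > 0\<close> unfolding sum_Suc by (simp add: field_simps)
  qed
  \<comment> \<open>summing out the last coordinate rescales the remaining parameters by \<open>1 - t\<close>\<close>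
  have "(\<Sum>x\<in>nm_box (Suc k) \<gamma> M. multinomial_weight (Suc k) c q x)
      \<le> (\<Sum>x\<in>nm_box k \<gamma> M. multinomial_weight k c q x * (1 / (1 - t) ^ Suc (c + (\<Sum>i=1..k. x i))))"
    unfolding sum_multinomial_weight_nm_box_Suc t_def[symmetric]
    using Suc.prems(1) \<open>0 \<le> t\<close> \<open>t < 1\<close>
    by (intro sum_mono mult_left_mono neg_binomial_partial_sum_le multinomial_weight_nonneg) auto
  also have "\<dots> = (\<Sum>x\<in>nm_box k \<gamma> M. multinomial_weight k c q' x) / (1 - t) ^ Suc c"
    unfolding q'_def multinomial_weight_divide[OF \<open>1 - t > 0\<close>[THEN less_imp_neq, symmetric]]
    by (simp add: sum_divide_distrib power_add ac_simps)
  also have "\<dots> \<le> (1 / (1 - s / (1 - t)) ^ Suc c) / (1 - t) ^ Suc c"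
    using IH \<open>1 - t > 0\<close> by (intro divide_right_mono) auto
  also have "\<dots> = 1 / ((1 - s / (1 - t)) * (1 - t)) ^ Suc c"
    by (simp add: power_mult_distrib)
  also have "(1 - s / (1 - t)) * (1 - t) = 1 - (\<Sum>i=1..Suc k. q i)"
    unfolding sum_Suc using \<open>1 - t > 0\<close> by (simp add: field_simps)
  finally show ?case .
qed

lemma atMost_eq_insert_0_atLeastAtMost: "{..k::nat} = insert 0 {1..k}"
  by auto

lemma nm_mass_eq_multinomial_weight:
  assumes "x \<in> nm_outcomes k \<gamma>" and "\<gamma> \<ge> 1"
  shows "nm_mass k \<gamma> q x = q 0 ^ \<gamma> * multinomial_weight k (\<gamma> - 1) q x"
proof -
  obtain g where \<gamma>: "\<gamma> = Suc g"
    using assms(2) by (cases \<gamma>) auto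
  have x0: "x 0 = \<gamma>"
    using assms(1) unfolding nm_outcomes_def by simp
  define m where "m = (\<Sum>i=1..k. x i)"
  define F where "F = (\<Prod>i=1..k. fact (x i) :: real)"
  define Q where "Q = (\<Prod>i=1..k. q i ^ x i)"
  have "F > 0"
    unfolding F_def by (auto intro: prod_pos)
  have "nm_mass k \<gamma> q x
      = real (Suc g) / real (Suc g + m) * (fact (Suc g + m) / (fact (Suc g) * F)) * (q 0 ^ Suc g * Q)"
    unfolding nm_mass_def Let_def atMost_eq_insert_0_atLeastAtMost
    by (simp add: x0 \<gamma> m_def F_def Q_def)
  \<comment> \<open>the factor \<open>\<gamma> / n\<close> turns \<open>n! / \<gamma>!\<close> into \<open>(n - 1)! / (\<gamma> - 1)!\<close>\<close>
  also have "\<dots> = q 0 ^ Suc g * (fact (g + m) / (fact g * F) * Q)"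
    using \<open>F > 0\<close> by (simp add: field_simps del: of_nat_Suc)
  also have "\<dots> = q 0 ^ \<gamma> * multinomial_weight k (\<gamma> - 1) q x"
    unfolding multinomial_weight_def \<gamma> m_def F_def Q_def by simp
  finally show ?thesis .
qed

lemma nm_mass_nonneg: "(\<And>i. i \<le> k \<Longrightarrow> 0 \<le> q i) \<Longrightarrow> 0 \<le> nm_mass k \<gamma> q x"
  unfolding nm_mass_def Let_def
  by (auto intro!: mult_nonneg_nonneg divide_nonneg_nonneg prod_nonneg sum_nonneg)

lemma sum_nm_mass_le_one:
  assumes "\<gamma> \<ge> 1" and "q 0 > 0" and "\<And>i. i \<le> k \<Longrightarrow> 0 \<le> q i" and "(\<Sum>i\<le>k. q i) = 1"
    and "finite F" and "F \<subseteq> nm_outcomes k \<gamma>"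
  shows "(\<Sum>x\<in>F. nm_mass k \<gamma> q x) \<le> 1"
proof -
  define M where "M = (\<Sum>x\<in>F. \<Sum>i\<le>k. x i)"
  have "x i \<le> M" if "x \<in> F" "i \<le> k" for x i
  proof -
    have "x i \<le> (\<Sum>i\<le>k. x i)"
      using that by (intro member_le_sum) auto
    also have "\<dots> \<le> M"
      unfolding M_def using that assms(5) by (intro member_le_sum) auto
    finally show ?thesis .
  qed
  then have "F \<subseteq> nm_box k \<gamma> M"
    using assms(6) unfolding nm_box_def by auto
  have rest: "(\<Sum>i=1..k. q i) = 1 - q 0"
    using assms(4) unfolding atMost_eq_insert_0_atLeastAtMost by simp
  have "(\<Sum>x\<in>F. nm_mass k \<gamma> q x) \<le> (\<Sum>x\<in>nm_box k \<gamma> M. nm_mass k \<gamma> q x)"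
    using \<open>F \<subseteq> nm_box k \<gamma> M\<close> by (intro sum_mono2 finite_nm_box nm_mass_nonneg assms(3))
  also have "\<dots> = q 0 ^ \<gamma> * (\<Sum>x\<in>nm_box k \<gamma> M. multinomial_weight k (\<gamma> - 1) q x)"
    unfolding sum_distrib_left
    by (intro sum.cong refl nm_mass_eq_multinomial_weight assms(1)) (simp add: nm_box_def)
  also have "\<dots> \<le> q 0 ^ \<gamma> * (1 / (1 - (1 - q 0)) ^ Suc (\<gamma> - 1))"
  proof (rule mult_left_mono)
    show "(\<Sum>x\<in>nm_box k \<gamma> M. multinomial_weight k (\<gamma> - 1) q x) \<le> 1 / (1 - (1 - q 0)) ^ Suc (\<gamma> - 1)"
      unfolding rest[symmetric] using assms(2,3) rest
      by (intro sum_multinomial_weight_nm_box_le) auto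
  qed (use assms(2) in simp)
  also have "\<dots> = 1"
    using assms(1,2) by simp
  finally show ?thesis .
qed

lemma power_le_tilted:
  fixes N P :: real and X Z :: nat
  assumes "N > 0" and "P > 0"
    and "X = Z \<or> (X \<le> Z \<and> real Z \<le> N * P) \<or> (Z \<le> X \<and> N * P \<le> real Z)"
  shows "P ^ X \<le> (N * P / real Z) ^ Z * (real Z / N) ^ X"
proof (cases "Z = 0")
  case True
  then show ?thesis
    using assms mult_pos_pos[OF assms(1,2)] by auto
next
  case False
  define r where "r = N * P / real Z"
  have "r > 0"
    unfolding r_def using assms False by simp
  have "r ^ X \<le> r ^ Z"
    using assms(3)
  proof (elim disjE conjE)
    assume "X \<le> Z" "real Z \<le> N * P"
    then show ?thesis
      using False by (intro power_increasing) (auto simp: r_def)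
  next
    assume "Z \<le> X" "N * P \<le> real Z"
    then show ?thesis
      using False \<open>r > 0\<close> by (intro power_decreasing) (auto simp: r_def)
  qed simp
  then have "r ^ X * (real Z / N) ^ X \<le> r ^ Z * (real Z / N) ^ X"
    by (rule mult_right_mono) (use assms in simp)
  moreover have "P = r * (real Z / N)"
    unfolding r_def using assms False by simp
  ultimately show ?thesis
    unfolding r_def by (metis power_mult_distrib)
qed

lemma nm_mass_le_prod:
  assumes "\<And>i. i \<le> k \<Longrightarrow> 0 \<le> p i" and "\<And>i. i \<le> k \<Longrightarrow> p i ^ x i \<le> c i * q i ^ x i"
  shows "nm_mass k \<gamma> p x \<le> (\<Prod>i\<le>k. c i) * nm_mass k \<gamma> q x"
proof -
  define A where "A = real \<gamma> / real (\<Sum>i\<le>k. x i) * (fact (\<Sum>i\<le>k. x i) / (\<Prod>i\<le>k. fact (x i)))"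
  have "0 \<le> A"
    unfolding A_def by (auto intro!: mult_nonneg_nonneg divide_nonneg_nonneg prod_nonneg sum_nonneg)
  have "(\<Prod>i\<le>k. p i ^ x i) \<le> (\<Prod>i\<le>k. c i * q i ^ x i)"
    using assms by (intro prod_mono) auto
  then have "A * (\<Prod>i\<le>k. p i ^ x i) \<le> A * ((\<Prod>i\<le>k. c i) * (\<Prod>i\<le>k. q i ^ x i))"
    unfolding prod.distrib by (rule mult_left_mono[OF _ \<open>0 \<le> A\<close>])
  then show ?thesis
    unfolding nm_mass_def Let_def A_def[symmetric] by (simp add: ac_simps)
qed

lemma nm_prob_le_of_mass_le:
  assumes "\<gamma> \<ge> 1" and "\<And>i. i \<le> k \<Longrightarrow> 0 \<le> p i"
    and "q 0 > 0" and "\<And>i. i \<le> k \<Longrightarrow> 0 \<le> q i" and "(\<Sum>i\<le>k. q i) = 1" and "0 \<le> C"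
    and mass_le: "\<And>x. x \<in> nm_outcomes k \<gamma> \<Longrightarrow> E x \<Longrightarrow> nm_mass k \<gamma> p x \<le> C * nm_mass k \<gamma> q x"
  shows "nm_prob k \<gamma> p E \<le> ennreal C"
proof -
  let ?E = "{x \<in> nm_outcomes k \<gamma>. E x}"
  have "nm_prob k \<gamma> p E = (SUP F\<in>{F. finite F \<and> F \<subseteq> ?E}. \<Sum>x\<in>F. ennreal (nm_mass k \<gamma> p x))"
    unfolding nm_prob_def by (rule nonneg_infsum_complete) simp
  also have "\<dots> \<le> ennreal C"
  proof (rule SUP_least)
    fix F
    assume F: "F \<in> {F. finite F \<and> F \<subseteq> ?E}"
    have "(\<Sum>x\<in>F. nm_mass k \<gamma> p x) \<le> (\<Sum>x\<in>F. C * nm_mass k \<gamma> q x)"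
      using F by (intro sum_mono mass_le) auto
    also have "\<dots> \<le> C * 1"
      unfolding sum_distrib_left[symmetric] using F assms(1,3-6)
      by (intro mult_left_mono sum_nm_mass_le_one) auto
    finally show "(\<Sum>x\<in>F. ennreal (nm_mass k \<gamma> p x)) \<le> ennreal C"
      using assms(2) by (simp add: sum_ennreal nm_mass_nonneg ennreal_leI)
  qed
  finally show ?thesis .
qed

lemma nm_prob_le_tilted:
  assumes "\<gamma> \<ge> 1" and "\<forall>i\<le>k. p i > 0" and "(\<Sum>i\<le>k. p i) = 1" and "z 0 = \<gamma>"
  defines "n \<equiv> (\<Sum>i\<le>k. z i)"
  assumes event: "\<And>x i. x \<in> nm_outcomes k \<gamma> \<Longrightarrow> E x \<Longrightarrow> i \<in> {1..k} \<Longrightarrow>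
      (x i \<le> z i \<and> real (z i) \<le> real n * p i) \<or> (z i \<le> x i \<and> real n * p i \<le> real (z i))"
  shows "nm_prob k \<gamma> p E \<le> ennreal (\<Prod>i\<le>k. (real n * p i / real (z i)) ^ z i)"
proof (rule nm_prob_le_of_mass_le)
  have "z 0 \<le> n"
    unfolding n_def by (rule member_le_sum) auto
  with assms(1,4) have "real n > 0"
    by simp
  define q where "q = (\<lambda>i. real (z i) / real n)"
  show "q 0 > 0" "\<And>i. 0 \<le> q i"
    unfolding q_def using \<open>real n > 0\<close> assms(1,4) by auto
  show "(\<Sum>i\<le>k. q i) = 1"
    unfolding q_def using \<open>real n > 0\<close> by (simp add: sum_divide_distrib[symmetric] n_def)
  show "0 \<le> (\<Prod>i\<le>k. (real n * p i / real (z i)) ^ z i)"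
    using assms(2) by (auto intro!: prod_nonneg)
  fix x
  assume "x \<in> nm_outcomes k \<gamma>" "E x"
  show "nm_mass k \<gamma> p x \<le> (\<Prod>i\<le>k. (real n * p i / real (z i)) ^ z i) * nm_mass k \<gamma> q x"
  proof (rule nm_mass_le_prod)
    fix i
    assume "i \<le> k"
    have "x i = z i" if "i = 0"
      using \<open>x \<in> nm_outcomes k \<gamma>\<close> that assms(4) unfolding nm_outcomes_def by simp
    then show "p i ^ x i \<le> (real n * p i / real (z i)) ^ z i * q i ^ x i"
      unfolding q_def
      using event[OF \<open>x \<in> nm_outcomes k \<gamma>\<close> \<open>E x\<close>, of i] \<open>i \<le> k\<close> assms(2) \<open>real n > 0\<close>
      by (cases "i = 0"; intro power_le_tilted) (auto simp: power_divide)
  qed (use assms(2) in auto)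
qed (use assms(1,2) in auto)

theorem corollary2:
  fixes k \<gamma> :: nat and p :: "nat \<Rightarrow> real" and z :: "nat \<Rightarrow> nat"
  assumes "\<gamma> \<ge> 1"
    and "\<forall>i\<le>k. p i > 0"
    and "(\<Sum>i\<le>k. p i) = 1"
    and "z 0 = \<gamma>"
  defines "n \<equiv> (\<Sum>i\<le>k. z i)"
  defines "\<mu> \<equiv> (\<lambda>i. real n * p i)"
  shows "(vprec k (\<lambda>i. real (z i)) \<mu> \<longrightarrow>
           nm_prob k \<gamma> p (\<lambda>x. vprec k x z) \<le> ennreal (\<Prod>i\<le>k. (\<mu> i / real (z i)) ^ z i))
       \<and> (vprec k \<mu> (\<lambda>i. real (z i)) \<longrightarrow>
           nm_prob k \<gamma> p (\<lambda>x. vprec k z x) \<le> ennreal (\<Prod>i\<le>k. (\<mu> i / real (z i)) ^ z i))"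
proof (intro conjI impI)
  note tilted = nm_prob_le_tilted[of \<gamma> k p z, OF assms(1-4), folded n_def]
  show "nm_prob k \<gamma> p (\<lambda>x. vprec k x z) \<le> ennreal (\<Prod>i\<le>k. (\<mu> i / real (z i)) ^ z i)"
    if "vprec k (\<lambda>i. real (z i)) \<mu>"
    unfolding \<mu>_def using that by (intro tilted) (auto simp: vprec_def \<mu>_def)
  show "nm_prob k \<gamma> p (\<lambda>x. vprec k z x) \<le> ennreal (\<Prod>i\<le>k. (\<mu> i / real (z i)) ^ z i)"
    if "vprec k \<mu> (\<lambda>i. real (z i))"
    unfolding \<mu>_def using that by (intro tilted) (auto simp: vprec_def \<mu>_def)
qed

end
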